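(* Let $0<x<1$ and put $g=x\frac{1+x+x^2}{(1+4x+x^2)^2}$. For integers $s\ge 0$ let $$R_s=\frac{1+4x+x^2}{1+x+x^2}\,\frac{(1-x^s)(1-x^{s+3})}{(1-x^{s+1})(1-x^{s+2})}$$ (so $R_0=0$), and for integers $s,t\ge 0$ let $$X_{s,t}=\frac{(1-x^3)(1-x^{s+1})(1-x^{t+1})(1-x^{s+t+3})}{(1-x)(1-x^{s+3})(1-x^{t+3})(1-x^{s+t+1})}.$$ Then $X_{s,0}=X_{0,t}=1$, and for all $s,t\ge 0$ $$X_{s,t}=1+g\,R_sR_t\,X_{s,t}\bigl(1+g\,R_{s+1}R_{t+1}X_{s+1,t+1}\bigr).$$ Moreover, for every $s\ge 1$, $$\log\!\left(\frac{X_{s,s}X_{s-1,s-1}}{X_{s-1,s}X_{s,s-1}}\right)=\log\left\{\frac{(1-x^{2s+3})(1-x^{2s})^2}{(1-x^{2s-1})(1-x^{2s+2})^2}\right\}.$$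
   Context: The quantity $X_{s,t}$ at $z=1$ is the generating function (weight $g$ per edge) of labelled chains with left labels $\ge 1-s$ and right labels $\ge 1-t$; the displayed recursion is the equation characterizing it, and the logarithmic expression is the generating function $F_s(g,1)$ of bi-pointed planar quadrangulations (weight $g$ per face) whose two marked vertices are at graph distance $2s$. *)

theory Defs
  imports Complex_Main
begin

definition gq :: "real \<Rightarrow> real" where
  "gq x = x * (1 + x + x^2) / (1 + 4*x + x^2)^2"

definition Rq :: "real \<Rightarrow> nat \<Rightarrow> real" where
  "Rq x s = (1 + 4*x + x^2) / (1 + x + x^2) *
     ((1 - x^s) * (1 - x^(s+3)) / ((1 - x^(s+1)) * (1 - x^(s+2))))"

definition Xq :: "real \<Rightarrow> nat \<Rightarrow> nat \<Rightarrow> real" where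
  "Xq x s t = ((1 - x^3) * (1 - x^(s+1)) * (1 - x^(t+1)) * (1 - x^(s+t+3))) /
     ((1 - x) * (1 - x^(s+3)) * (1 - x^(t+3)) * (1 - x^(s+t+1)))"

end

theory Submission
  imports Defs
begin

text \<open>Put \<open>a = x^s\<close> and \<open>b = x^t\<close>. Then \<open>R\<^sub>s\<close> and \<open>X\<^sub>s\<^sub>,\<^sub>t\<close> are rational functions of
  \<open>x, a, b\<close>, the shift \<open>s \<mapsto> s + 1\<close> becomes \<open>a \<mapsto> a x\<close>, and the product
  \<open>g R\<^sub>s R\<^sub>t X\<^sub>s\<^sub>,\<^sub>t\<close> collapses to the much simpler rational function \<open>Y_rat\<close>.
  The recursion is then a polynomial identity in \<open>x, a, b\<close>, and in the cross ratio of
  \<open>X\<close> almost all factors cancel. All denominators are positive as long as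
  \<open>0 < x < 1\<close> and \<open>0 \<le> a, b \<le> 1\<close>.\<close>

definition R_rat :: "real \<Rightarrow> real \<Rightarrow> real" where
  "R_rat x a = (1 + 4*x + x^2) / (1 + x + x^2) * ((1 - a) * (1 - a*x^3) / ((1 - a*x) * (1 - a*x^2)))"

definition X_rat :: "real \<Rightarrow> real \<Rightarrow> real \<Rightarrow> real" where
  "X_rat x a b = ((1 - x^3) * (1 - a*x) * (1 - b*x) * (1 - a*b*x^3)) /
     ((1 - x) * (1 - a*x^3) * (1 - b*x^3) * (1 - a*b*x))"

definition Y_rat :: "real \<Rightarrow> real \<Rightarrow> real \<Rightarrow> real" where
  "Y_rat x a b = x * (1 - a) * (1 - b) * (1 - a*b*x^3) / ((1 - a*x^2) * (1 - b*x^2) * (1 - a*b*x))"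

lemma Rq_eq_R_rat: "Rq x s = R_rat x (x^s)"
  unfolding Rq_def R_rat_def by (simp add: power_add mult_ac power2_eq_square)

lemma Xq_eq_X_rat: "Xq x s t = X_rat x (x^s) (x^t)"
  unfolding Xq_def X_rat_def by (simp add: power_add mult_ac)

lemma one_minus_mult_power_pos:
  fixes x a :: real
  assumes "0 < x" "x < 1" "0 \<le> a" "a \<le> 1" "k \<noteq> 0"
  shows "0 < 1 - a * x^k"
proof -
  have "x^k < 1" using assms by (simp add: power_less_one_iff)
  moreover have "a * x^k \<le> x^k" using assms by (simp add: mult_left_le_one_le)
  ultimately show ?thesis by linarith
qed

lemma power_unit_interval:
  fixes x :: real
  assumes "0 < x" "x < 1"
  shows "0 \<le> x^n" "x^n \<le> 1"
  using assms by (simp_all add: power_le_one)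

lemma X_rat_one:
  fixes x a :: real
  assumes "0 < x" "x < 1" "0 \<le> a" "a \<le> 1"
  shows "X_rat x a 1 = 1" and "X_rat x 1 a = 1"
proof -
  have "0 < 1 - x" "0 < 1 - x^3" "0 < 1 - a*x" "0 < 1 - a*x^3"
    using one_minus_mult_power_pos[OF assms(1,2), of 1 1] one_minus_mult_power_pos[OF assms(1,2), of 1 3]
      one_minus_mult_power_pos[OF assms, of 1] one_minus_mult_power_pos[OF assms, of 3]
    by simp_all
  then show "X_rat x a 1 = 1" "X_rat x 1 a = 1"
    unfolding X_rat_def by (simp_all add: mult_ac)
qed

lemma gq_R_rat_X_rat_eq_Y_rat:
  fixes x a b :: real
  assumes x: "0 < x" "x < 1" and a: "0 \<le> a" "a \<le> 1" and b: "0 \<le> b" "b \<le> 1"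
  shows "gq x * R_rat x a * R_rat x b * X_rat x a b = Y_rat x a b"
proof -
  have ab: "0 \<le> a*b" "a*b \<le> 1" using a b by (simp_all add: mult_le_one)
  have nz: "1 - a*x \<noteq> 0" "1 - a*x^2 \<noteq> 0" "1 - a*x^3 \<noteq> 0"
       "1 - b*x \<noteq> 0" "1 - b*x^2 \<noteq> 0" "1 - b*x^3 \<noteq> 0" "1 - a*b*x \<noteq> 0"
    using one_minus_mult_power_pos[OF x a, of 1] one_minus_mult_power_pos[OF x a, of 2]
      one_minus_mult_power_pos[OF x a, of 3] one_minus_mult_power_pos[OF x b, of 1]
      one_minus_mult_power_pos[OF x b, of 2] one_minus_mult_power_pos[OF x b, of 3]
      one_minus_mult_power_pos[OF x ab, of 1]
    by (simp_all add: mult.assoc)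
  have x_nz: "1 + x + x^2 \<noteq> 0" "1 + 4*x + x^2 \<noteq> 0" "1 - x \<noteq> 0"
    using x by (smt (verit) zero_le_power2)+
  have cube: "1 - x^3 = (1 - x) * (1 + x + x^2)" by algebra
  \<comment> \<open>with the polynomial factors abstracted to atoms, \<open>field_simps\<close> does not expand them\<close>
  have cancel: "\<And>P Q w u1 u2 u3 v1 v2 v3 ab1 a0 b0 ab3 :: real.
     P \<noteq> 0 \<Longrightarrow> Q \<noteq> 0 \<Longrightarrow> w \<noteq> 0 \<Longrightarrow> u1 \<noteq> 0 \<Longrightarrow> u2 \<noteq> 0 \<Longrightarrow> u3 \<noteq> 0 \<Longrightarrow>
     v1 \<noteq> 0 \<Longrightarrow> v2 \<noteq> 0 \<Longrightarrow> v3 \<noteq> 0 \<Longrightarrow> ab1 \<noteq> 0 \<Longrightarrow>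
     x*P/Q^2 * (Q/P*(a0*u3/(u1*u2))) * (Q/P*(b0*v3/(v1*v2))) * ((w*P)*u1*v1*ab3/(w*u3*v3*ab1))
       = x*a0*b0*ab3/(u2*v2*ab1)"
    by (simp add: field_simps power2_eq_square)
  show ?thesis
    unfolding gq_def R_rat_def X_rat_def Y_rat_def cube by (rule cancel[OF x_nz nz])
qed

lemma X_rat_recursion:
  fixes x a b :: real
  assumes x: "0 < x" "x < 1" and a: "0 \<le> a" "a \<le> 1" and b: "0 \<le> b" "b \<le> 1"
  shows "X_rat x a b = 1 + Y_rat x a b * (1 + Y_rat x (a*x) (b*x))"
proof -
  have ab: "0 \<le> a*b" "a*b \<le> 1" using a b by (simp_all add: mult_le_one)
  define E1 where "E1 = (1 - a*x^2) * (1 - b*x^2) * (1 - a*b*x)"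
  define E2 where "E2 = (1 - a*x^3) * (1 - b*x^3) * (1 - a*b*x^3)"
  define N1 where "N1 = x * (1 - a) * (1 - b) * (1 - a*b*x^3)"
  define N2 where "N2 = x * (1 - a*x) * (1 - b*x) * (1 - a*b*x^5)"
  define N where "N = (1 - x^3) * (1 - a*x) * (1 - b*x) * (1 - a*b*x^3)"
  define D where "D = (1 - x) * (1 - a*x^3) * (1 - b*x^3) * (1 - a*b*x)"
  have "E1 \<noteq> 0" "E2 \<noteq> 0" "D \<noteq> 0"
    unfolding E1_def E2_def D_def
    using one_minus_mult_power_pos[OF x a, of 2] one_minus_mult_power_pos[OF x a, of 3]
      one_minus_mult_power_pos[OF x b, of 2] one_minus_mult_power_pos[OF x b, of 3]
      one_minus_mult_power_pos[OF x ab, of 1] one_minus_mult_power_pos[OF x ab, of 3] x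
    by (auto simp: mult.assoc)
  moreover have "N * (E1 * E2) = (E1 * E2 + N1 * (E2 + N2)) * D"
    unfolding N_def E1_def E2_def N1_def N2_def D_def by algebra
  ultimately have "N / D = 1 + N1 / E1 * (1 + N2 / E2)"
    by (simp add: field_simps)
  moreover have "Y_rat x (a*x) (b*x) = N2 / E2"
    unfolding Y_rat_def N2_def E2_def by (simp add: algebra_simps eval_nat_numeral)
  ultimately show ?thesis by (simp add: N_def D_def N1_def E1_def Y_rat_def X_rat_def)
qed

lemma X_rat_commute: "X_rat x a b = X_rat x b a"
  unfolding X_rat_def by (simp add: mult_ac)

lemma X_rat_cross_ratio:
  fixes x a :: real
  assumes x: "0 < x" "x < 1" and a: "0 \<le> a" "a \<le> 1"
  shows "X_rat x (a*x) (a*x) * X_rat x a a / (X_rat x a (a*x) * X_rat x (a*x) a)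
     = (1 - a^2*x^5) * (1 - a^2*x^2)^2 / ((1 - a^2*x) * (1 - a^2*x^4)^2)"
proof -
  have a2: "0 \<le> a^2" "a^2 \<le> 1" using a by (simp_all add: power_le_one)
  have nz: "1 - a*x \<noteq> 0" "1 - a*x^2 \<noteq> 0" "1 - a*x^3 \<noteq> 0" "1 - a*x^4 \<noteq> 0"
      "1 - a^2*x \<noteq> 0" "1 - a^2*x^2 \<noteq> 0" "1 - a^2*x^3 \<noteq> 0" "1 - a^2*x^4 \<noteq> 0"
      "(1 - x^3) / (1 - x) \<noteq> 0"
    using one_minus_mult_power_pos[OF x a, of 1] one_minus_mult_power_pos[OF x a, of 2]
      one_minus_mult_power_pos[OF x a, of 3] one_minus_mult_power_pos[OF x a, of 4]
      one_minus_mult_power_pos[OF x a2, of 1] one_minus_mult_power_pos[OF x a2, of 2]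
      one_minus_mult_power_pos[OF x a2, of 3] one_minus_mult_power_pos[OF x a2, of 4]
      one_minus_mult_power_pos[OF x, of 1 1] one_minus_mult_power_pos[OF x, of 1 3]
    by simp_all
  let ?c = "(1 - x^3) / (1 - x)"
  have "X_rat x (a*x) (a*x) = ?c * (1 - a*x^2) * (1 - a*x^2) * (1 - a^2*x^5)
      / ((1 - a*x^4) * (1 - a*x^4) * (1 - a^2*x^3))"
    and "X_rat x a a = ?c * (1 - a*x) * (1 - a*x) * (1 - a^2*x^3)
      / ((1 - a*x^3) * (1 - a*x^3) * (1 - a^2*x))"
    and "X_rat x a (a*x) = ?c * (1 - a*x) * (1 - a*x^2) * (1 - a^2*x^4)
      / ((1 - a*x^3) * (1 - a*x^4) * (1 - a^2*x^2))"
    unfolding X_rat_def by (simp_all add: eval_nat_numeral mult_ac)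
  \<comment> \<open>with the polynomial factors abstracted to atoms, \<open>field_simps\<close> does not expand them\<close>
  moreover have "\<And>c u1 u2 u3 u4 v1 v2 v3 v4 v5 :: real.
     c \<noteq> 0 \<Longrightarrow> u1 \<noteq> 0 \<Longrightarrow> u2 \<noteq> 0 \<Longrightarrow> u3 \<noteq> 0 \<Longrightarrow> u4 \<noteq> 0 \<Longrightarrow>
     v1 \<noteq> 0 \<Longrightarrow> v2 \<noteq> 0 \<Longrightarrow> v3 \<noteq> 0 \<Longrightarrow> v4 \<noteq> 0 \<Longrightarrow>
     (c*u2*u2*v5/(u4*u4*v3)) * (c*u1*u1*v3/(u3*u3*v1)) / ((c*u1*u2*v4/(u3*u4*v2))*(c*u1*u2*v4/(u3*u4*v2)))
      = v5*v2^2/(v1*v4^2)"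
    by (simp add: field_simps power2_eq_square)
  ultimately show ?thesis
    using nz by (simp only: X_rat_commute[of x "a*x" a])
qed

lemma Xq_zero:
  fixes x :: real
  assumes "0 < x" "x < 1"
  shows "Xq x s 0 = 1" and "Xq x 0 t = 1"
  unfolding Xq_eq_X_rat power_0 using X_rat_one[OF assms power_unit_interval[OF assms]] by simp_all

lemma Xq_recursion:
  fixes x :: real
  assumes "0 < x" "x < 1"
  shows "Xq x s t = 1 + gq x * Rq x s * Rq x t * Xq x s t *
           (1 + gq x * Rq x (s+1) * Rq x (t+1) * Xq x (s+1) (t+1))"
proof -
  have Y: "gq x * Rq x m * Rq x n * Xq x m n = Y_rat x (x^m) (x^n)" for m n
    unfolding Rq_eq_R_rat Xq_eq_X_rat
    by (rule gq_R_rat_X_rat_eq_Y_rat[OF assms power_unit_interval[OF assms] power_unit_interval[OF assms]])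
  show ?thesis
    unfolding Y unfolding power_add power_one_right Xq_eq_X_rat
    by (rule X_rat_recursion[OF assms power_unit_interval[OF assms] power_unit_interval[OF assms]])
qed

lemma Xq_cross_ratio:
  fixes x :: real
  assumes "0 < x" "x < 1" and "1 \<le> s"
  shows "Xq x s s * Xq x (s-1) (s-1) / (Xq x (s-1) s * Xq x s (s-1))
       = ((1 - x^(2*s+3)) * (1 - x^(2*s))^2) / ((1 - x^(2*s-1)) * (1 - x^(2*s+2))^2)"
proof -
  obtain k where s: "s = Suc k" using assms(3) by (cases s) auto
  have pow: "x^(2*s+3) = (x^k)^2 * x^5" "x^(2*s+2) = (x^k)^2 * x^4" "x^(2*s) = (x^k)^2 * x^2"
    "x^(2*s-1) = (x^k)^2 * x" "x^s = x^k * x" "s - 1 = k"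
    by (simp_all add: s power_add power_mult[symmetric] mult_ac eval_nat_numeral)
  show ?thesis
    unfolding Xq_eq_X_rat pow
    by (rule X_rat_cross_ratio[OF assms(1,2) power_unit_interval[OF assms(1,2)]])
qed

theorem mainTheorem1:
  fixes x :: real
  assumes "0 < x" and "x < 1"
  shows "(\<forall>s t. Xq x s 0 = 1 \<and> Xq x 0 t = 1)
    \<and> (\<forall>s t. Xq x s t = 1 + gq x * Rq x s * Rq x t * Xq x s t *
            (1 + gq x * Rq x (s+1) * Rq x (t+1) * Xq x (s+1) (t+1)))
    \<and> (\<forall>s::nat. s \<ge> 1 \<longrightarrow>
          ln (Xq x s s * Xq x (s-1) (s-1) / (Xq x (s-1) s * Xq x s (s-1)))
        = ln (((1 - x^(2*s+3)) * (1 - x^(2*s))^2) /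
              ((1 - x^(2*s-1)) * (1 - x^(2*s+2))^2)))"
  using Xq_zero[OF assms] Xq_recursion[OF assms] Xq_cross_ratio[OF assms] by simp

end
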